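(* A c.i.d. sequence $(X_n)_{n\ge1}$ of $\mathbb X$-valued random variables is exchangeable if and only if, for every $n\ge1$ and every permutation $\pi$ of $\{1,\dots,n\}$, $$\mathbb P[X_{n+1}\in\cdot\mid X_1\in A_1,\dots,X_n\in A_n]=\mathbb P[X_{n+1}\in\cdot\mid X_{\pi(1)}\in A_1,\dots,X_{\pi(n)}\in A_n]$$ for all $A_1,\dots,A_n\in\mathcal X$ such that both conditioning events have positive probability.
   Context: $(\Omega,\mathcal F,\mathbb P)$ is a probability space; $\mathbb X$ is Polish with Borel $\sigma$-algebra $\mathcal X$. A sequence $(X_n)$ is c.i.d. if $\mathbb E[f(X_{n+k})\mid X_1,\dots,X_n]=\mathbb E[f(X_{n+1})\mid X_1,\dots,X_n]$ a.s. for all $k\ge1$, $n\ge0$ and bounded measurable $f:\mathbb X\to\mathbb R$ (for $n=0$, conditioning is on the trivial $\sigma$-field). It is exchangeable if its law is invariant under finite permutations of the indices. *)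

theory Defs
  imports "HOL-Probability.Probability" "HOL-Combinatorics.Permutations"
begin

text \<open>Indexing convention: the paper's X_1, X_2, ... are X 0, X 1, ... here.\<close>

definition nat_filt :: "'a measure \<Rightarrow> (nat \<Rightarrow> 'a \<Rightarrow> 'b::topological_space) \<Rightarrow> nat \<Rightarrow> 'a measure" where
  "nat_filt M X n = sigma (space M) {X i -` B \<inter> space M | i B. i < n \<and> B \<in> sets borel}"

text \<open>Conditionally identically distributed sequence. In 0-based indexing the paper's
  X_{n+k} (k >= 1) is X (n + k) with k >= 0 here, and X_{n+1} is X n.\<close>
definition cid :: "'a measure \<Rightarrow> (nat \<Rightarrow> 'a \<Rightarrow> 'b::topological_space) \<Rightarrow> bool" where
  "cid M X \<longleftrightarrow> (\<forall>n k (f::'b \<Rightarrow> real). f \<in> borel_measurable borel \<longrightarrow> bounded (range f) \<longrightarrow>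
      (AE \<omega> in M. real_cond_exp M (nat_filt M X n) (\<lambda>\<omega>. f (X (n + k) \<omega>)) \<omega>
                 = real_cond_exp M (nat_filt M X n) (\<lambda>\<omega>. f (X n \<omega>)) \<omega>))"

definition exchangeable :: "'a measure \<Rightarrow> (nat \<Rightarrow> 'a \<Rightarrow> 'b::topological_space) \<Rightarrow> bool" where
  "exchangeable M X \<longleftrightarrow> (\<forall>\<pi>. \<pi> permutes UNIV \<and> finite {i. \<pi> i \<noteq> i} \<longrightarrow>
      distr M (PiM UNIV (\<lambda>_. borel)) (\<lambda>\<omega> i. X (\<pi> i) \<omega>)
      = distr M (PiM UNIV (\<lambda>_. borel)) (\<lambda>\<omega> i. X i \<omega>))"

end

theory Submission
  imports Defs
begin

text \<open>
  Exchangeability follows once \<open>(X (j 0), \<dots>, X (j (k - 1)))\<close> has the law of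
  \<open>(X 0, \<dots>, X (k - 1))\<close> for every injective \<open>j\<close>; this is shown by induction on \<open>k\<close>.
  If the largest index \<open>j (k - 1)\<close> comes last, extend \<open>j\<close> on the first \<open>k - 1\<close> places to a
  permutation of \<open>{..<j (k - 1)}\<close>. The hypothesis, together with the induction hypothesis for the
  two conditioning rectangles, gives \<open>X (j (k - 1))\<close> the same conditional law on both of them,
  and the c.i.d.\ property moves it from time \<open>j (k - 1)\<close> back to time \<open>k - 1\<close>.
  Otherwise the entries at positions \<open>p\<close> and \<open>k - 1\<close> of a rectangle have to be swapped.
  Placing these two coordinates at far-away consecutive times \<open>N\<close>, \<open>N + 1\<close> changes neither
  probability, by the first case. Replacing their indicators by the predictive probabilities
  \<open>P(X N \<in> B | X 0, \<dots>, X (N - 1))\<close>, which form a martingale in \<open>N\<close>, makes the two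
  expressions symmetric, at the cost of the \<open>L\<^sup>2\<close> norm of one martingale increment. The
  increments are square-summable, so the two probabilities coincide.
\<close>

lemma nonpos_if_eventually_le_summable:
  fixes a :: "nat \<Rightarrow> real"
  assumes "summable a" and "\<And>N. N \<ge> k \<Longrightarrow> c \<le> a N"
  shows "c \<le> 0"
  using assms by (intro LIMSEQ_le_const[OF summable_LIMSEQ_zero]) auto

lemma inj_on_extends_to_permutation:
  fixes j :: "nat \<Rightarrow> nat"
  assumes inj: "inj_on j {..<k}" and range: "j ` {..<k} \<subseteq> {..<n}" and "k \<le> n"
  obtains \<pi> where "\<pi> permutes {..<n}" and "\<And>i. i < k \<Longrightarrow> \<pi> i = j i"
proof -
  define S where "S = {..<n} - {..<k}"
  define T where "T = {..<n} - j ` {..<k}"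
  have "card S = card T"
    using \<open>k \<le> n\<close> range inj by (simp add: S_def T_def card_Diff_subset card_image)
  then obtain h where h: "bij_betw h S T"
    using finite_same_card_bij[of S T] by (auto simp: S_def T_def)
  define \<pi> where "\<pi> i = (if i < k then j i else if i < n then h i else i)" for i
  have "bij_betw \<pi> {..<k} (j ` {..<k})"
    using inj_on_imp_bij_betw[OF inj] by (rule bij_betw_cong[THEN iffD1, rotated]) (simp add: \<pi>_def)
  moreover have "bij_betw \<pi> S T"
    using h by (rule bij_betw_cong[THEN iffD1, rotated]) (auto simp: \<pi>_def S_def)
  ultimately have "bij_betw \<pi> ({..<k} \<union> S) (j ` {..<k} \<union> T)"
    by (rule bij_betw_combine) (auto simp: T_def)
  moreover have "{..<k} \<union> S = {..<n}" and "j ` {..<k} \<union> T = {..<n}"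
    using \<open>k \<le> n\<close> range by (auto simp: S_def T_def)
  ultimately have "\<pi> permutes {..<n}"
    by (intro bij_imp_permutes) (use \<open>k \<le> n\<close> in \<open>auto simp: \<pi>_def\<close>)
  then show thesis by (rule that) (simp add: \<pi>_def)
qed

lemma all_less_permutes_iff:
  assumes "\<sigma> permutes {..<n}"
  shows "(\<forall>i<n. P (\<sigma> i)) \<longleftrightarrow> (\<forall>i<n. P i)"
proof -
  have "(\<forall>i<n. P (\<sigma> i)) \<longleftrightarrow> (\<forall>x\<in>\<sigma> ` {..<n}. P x)" by auto
  then show ?thesis by (auto simp: permutes_image[OF assms])
qed

lemma rectangle_in_sets:
  fixes k :: nat
  assumes "\<And>i. i < k \<Longrightarrow> Y i \<in> borel_measurable N" and "\<And>i. i < k \<Longrightarrow> A i \<in> sets borel"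
  shows "{\<omega> \<in> space N. \<forall>i<k. Y i \<omega> \<in> A i} \<in> sets N"
  using assms
proof (induction k)
  case (Suc k)
  have "{\<omega> \<in> space N. \<forall>i<Suc k. Y i \<omega> \<in> A i} = {\<omega> \<in> space N. \<forall>i<k. Y i \<omega> \<in> A i} \<inter> (Y k -` A k \<inter> space N)"
    by (auto simp: less_Suc_eq)
  also have "\<dots> \<in> sets N"
    using Suc by (intro sets.Int measurable_sets[of "Y k"]) auto
  finally show ?case .
qed simp

lemma (in finite_measure) integrable_if_abs_le:
  fixes f :: "'a \<Rightarrow> real"
  shows "f \<in> borel_measurable M \<Longrightarrow> AE x in M. \<bar>f x\<bar> \<le> c \<Longrightarrow> integrable M f"
  by (rule integrable_const_bound[where B=c]) auto

lemma (in prob_space) square_integral_mult_le: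
  fixes h d :: "'a \<Rightarrow> real"
  assumes [measurable]: "h \<in> borel_measurable M" "d \<in> borel_measurable M"
    and h_le: "\<And>\<omega>. \<bar>h \<omega>\<bar> \<le> 1" and d_le: "AE \<omega> in M. \<bar>d \<omega>\<bar> \<le> c"
  shows "(\<integral>\<omega>. h \<omega> * d \<omega> \<partial>M)\<^sup>2 \<le> (\<integral>\<omega>. (d \<omega>)\<^sup>2 \<partial>M)"
proof -
  have hd_le: "\<bar>h \<omega> * d \<omega>\<bar> \<le> \<bar>d \<omega>\<bar>" for \<omega>
    using h_le[of \<omega>] by (simp add: abs_mult mult_left_le_one_le)
  then have hd_sq_le: "(h \<omega> * d \<omega>)\<^sup>2 \<le> (d \<omega>)\<^sup>2" for \<omega>
    by (simp add: abs_le_square_iff[symmetric])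
  have d_sq_le: "AE \<omega> in M. \<bar>(d \<omega>)\<^sup>2\<bar> \<le> c\<^sup>2"
    using d_le by eventually_elim (metis abs_ge_zero abs_power2 power2_abs power_mono)
  have int_hd: "integrable M (\<lambda>\<omega>. h \<omega> * d \<omega>)"
    using d_le by (intro integrable_if_abs_le[where c=c]) (auto elim!: eventually_mono intro: order_trans[OF hd_le])
  have int_d_sq: "integrable M (\<lambda>\<omega>. (d \<omega>)\<^sup>2)"
    using d_sq_le by (intro integrable_if_abs_le[where c="c\<^sup>2"]) auto
  have int_hd_sq: "integrable M (\<lambda>\<omega>. (h \<omega> * d \<omega>)\<^sup>2)"
    using d_sq_le by (intro integrable_if_abs_le[where c="c\<^sup>2"]) (auto elim!: eventually_mono intro: order_trans[OF hd_sq_le])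
  have "(\<integral>\<omega>. h \<omega> * d \<omega> \<partial>M)\<^sup>2 \<le> (\<integral>\<omega>. (h \<omega> * d \<omega>)\<^sup>2 \<partial>M)"
    using variance_eq[OF int_hd int_hd_sq]
      Bochner_Integration.integral_nonneg[of M "\<lambda>\<omega>. (h \<omega> * d \<omega> - expectation (\<lambda>\<omega>. h \<omega> * d \<omega>))\<^sup>2"]
    by simp
  also have "\<dots> \<le> (\<integral>\<omega>. (d \<omega>)\<^sup>2 \<partial>M)"
    by (rule integral_mono[OF int_hd_sq int_d_sq hd_sq_le])
  finally show ?thesis .
qed

section \<open>Natural filtration\<close>

lemma space_nat_filt [simp]: "space (nat_filt M X n) = space M"
  unfolding nat_filt_def by (auto simp: space_measure_of_conv)

lemma sets_nat_filt:
  "sets (nat_filt M X n) = sigma_sets (space M) {X i -` B \<inter> space M | i B. i < n \<and> B \<in> sets borel}"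
  unfolding nat_filt_def by (subst sets_measure_of_conv) auto

lemma nat_filt_mono: "n \<le> m \<Longrightarrow> subalgebra (nat_filt M X m) (nat_filt M X n)"
  unfolding subalgebra_def sets_nat_filt by (force intro!: sigma_sets_mono')

lemma measurable_nat_filt: "i < n \<Longrightarrow> X i \<in> borel_measurable (nat_filt M X n)"
  by (rule measurableI) (auto simp: sets_nat_filt intro!: sigma_sets.Basic)

lemma subalgebra_nat_filt:
  assumes "\<And>i. X i \<in> borel_measurable M"
  shows "subalgebra M (nat_filt M X n)"
proof -
  have "sets (nat_filt M X n) \<subseteq> sets M"
    unfolding sets_nat_filt using assms by (intro sets.sigma_sets_subset) auto
  then show ?thesis by (simp add: subalgebra_def)
qed

section \<open>Exchangeability via finite-dimensional rectangles\<close>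

lemma measurable_reindexed_sequence:
  assumes "\<And>i. X i \<in> borel_measurable M"
  shows "(\<lambda>\<omega> i. X (\<pi> i) \<omega>) \<in> measurable M (PiM UNIV (\<lambda>_. borel))"
  using assms by (intro measurable_PiM_single'[where f="\<lambda>i \<omega>. X (\<pi> i) \<omega>"]) (auto simp: space_PiM)

lemma emeasure_distr_prod_emb:
  assumes "\<And>i. X i \<in> borel_measurable M" and "finite J" and "\<forall>i\<in>J. A i \<in> sets borel"
  shows "emeasure (distr M (PiM UNIV (\<lambda>_. borel)) (\<lambda>\<omega> i. X (\<pi> i) \<omega>))
           (prod_emb UNIV (\<lambda>_. borel) J (PiE J A))
       = emeasure M {\<omega>\<in>space M. \<forall>i\<in>J. X (\<pi> i) \<omega> \<in> A i}"
proof -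
  have "prod_emb UNIV (\<lambda>_. borel) J (PiE J A) \<in> sets (PiM UNIV (\<lambda>_. borel))"
    using assms(2,3) by (intro sets_PiM_I) auto
  moreover have "(\<lambda>\<omega> i. X (\<pi> i) \<omega>) -` prod_emb UNIV (\<lambda>_. borel) J (PiE J A) \<inter> space M
      = {\<omega>\<in>space M. \<forall>i\<in>J. X (\<pi> i) \<omega> \<in> A i}"
    by (auto simp: prod_emb_iff restrict_PiE_iff)
  ultimately show ?thesis
    using emeasure_distr[OF measurable_reindexed_sequence[of X M \<pi>]] assms(1) by simp
qed

lemma (in prob_space) exchangeable_iff_rectangles:
  assumes "\<And>i. X i \<in> borel_measurable M"
  shows "exchangeable M X \<longleftrightarrow>
    (\<forall>(\<pi>::nat \<Rightarrow> nat) J A. \<pi> permutes UNIV \<longrightarrow> finite {i. \<pi> i \<noteq> i} \<longrightarrow> finite J \<longrightarrow>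
      (\<forall>i\<in>J. A i \<in> sets borel) \<longrightarrow>
      measure M {\<omega>\<in>space M. \<forall>i\<in>J. X (\<pi> i) \<omega> \<in> A i} = measure M {\<omega>\<in>space M. \<forall>i\<in>J. X i \<omega> \<in> A i})"
    (is "_ \<longleftrightarrow> ?rect")
proof
  assume exch: "exchangeable M X"
  show ?rect
  proof (intro allI impI)
    fix \<pi> :: "nat \<Rightarrow> nat" and J and A :: "nat \<Rightarrow> 'b set"
    assume "\<pi> permutes UNIV" "finite {i. \<pi> i \<noteq> i}" "finite J" "\<forall>i\<in>J. A i \<in> sets borel"
    then show "measure M {\<omega>\<in>space M. \<forall>i\<in>J. X (\<pi> i) \<omega> \<in> A i} = measure M {\<omega>\<in>space M. \<forall>i\<in>J. X i \<omega> \<in> A i}"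
      using exch emeasure_distr_prod_emb[of X M J A \<pi>] emeasure_distr_prod_emb[of X M J A "\<lambda>i. i"] assms
      by (simp add: exchangeable_def emeasure_eq_measure)
  qed
next
  assume ?rect
  show "exchangeable M X"
    unfolding exchangeable_def
  proof (intro allI impI measure_eqI_PiM_infinite)
    fix \<pi> :: "nat \<Rightarrow> nat" and J and A :: "nat \<Rightarrow> 'b set"
    assume "\<pi> permutes UNIV \<and> finite {i. \<pi> i \<noteq> i}" "finite J" "\<And>i. i \<in> J \<Longrightarrow> A i \<in> sets borel"
    then show "emeasure (distr M (PiM UNIV (\<lambda>_. borel)) (\<lambda>\<omega> i. X (\<pi> i) \<omega>)) (prod_emb UNIV (\<lambda>_. borel) J (PiE J A))
      = emeasure (distr M (PiM UNIV (\<lambda>_. borel)) (\<lambda>\<omega> i. X i \<omega>)) (prod_emb UNIV (\<lambda>_. borel) J (PiE J A))"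
      using \<open>?rect\<close> emeasure_distr_prod_emb[of X M J A \<pi>] emeasure_distr_prod_emb[of X M J A "\<lambda>i. i"] assms
      by (simp add: emeasure_eq_measure)
  next
    fix \<pi> :: "nat \<Rightarrow> nat"
    show "finite_measure (distr M (PiM UNIV (\<lambda>_. borel)) (\<lambda>\<omega> i. X (\<pi> i) \<omega>))"
      using measurable_reindexed_sequence[of X M \<pi>] assms by (intro prob_space.finite_measure prob_space_distr) auto
  qed simp_all
qed

section \<open>The predictive martingale of a c.i.d.\ sequence\<close>

locale cid_sequence = prob_space M for M :: "'a measure" +
  fixes X :: "nat \<Rightarrow> 'a \<Rightarrow> 'b::topological_space"
  assumes measurable_X [measurable]: "\<And>i. X i \<in> borel_measurable M"
    and cid_X: "cid M X"
begin

abbreviation F :: "nat \<Rightarrow> 'a measure" where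
  "F n \<equiv> nat_filt M X n"

lemma subalgebra_F: "subalgebra M (F n)"
  by (rule subalgebra_nat_filt) simp

lemma sigma_finite_subalgebra_F: "sigma_finite_subalgebra M (F n)"
  by (intro finite_measure_subalgebra_is_sigma_finite)
    (simp add: finite_measure_subalgebra_def finite_measure_subalgebra_axioms_def subalgebra_F finite_measure_axioms)

lemma measurable_F_imp_measurable: "f \<in> borel_measurable (F n) \<Longrightarrow> f \<in> borel_measurable M"
  by (rule measurable_from_subalg[OF subalgebra_F])

lemma measurable_F_mono: "f \<in> borel_measurable (F n) \<Longrightarrow> n \<le> m \<Longrightarrow> f \<in> borel_measurable (F m)"
  by (rule measurable_from_subalg[OF nat_filt_mono])

lemma rectangle_in_F:
  assumes "k \<le> n" and "\<And>i. i < k \<Longrightarrow> A i \<in> sets borel"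
  shows "{\<omega>\<in>space M. \<forall>i<k. X i \<omega> \<in> A i} \<in> sets (F n)"
proof -
  have "X i \<in> borel_measurable (F n)" if "i < k" for i
    using that assms(1) by (intro measurable_nat_filt) simp
  from rectangle_in_sets[OF this assms(2)] show ?thesis by (simp only: space_nat_filt)
qed

lemma rectangle_in_events:
  "(\<And>i. i < (k::nat) \<Longrightarrow> A i \<in> sets borel) \<Longrightarrow> {\<omega>\<in>space M. \<forall>i<k. X (j i) \<omega> \<in> A i} \<in> events"
  by (rule rectangle_in_sets[of k "\<lambda>i. X (j i)" M A]) simp_all

lemma measure_Int_eq_integral:
  assumes "E \<in> events"
  shows "measure M ({\<omega>\<in>space M. X m \<omega> \<in> B} \<inter> E) = (\<integral>\<omega>. indicator E \<omega> * indicator B (X m \<omega>) \<partial>M)"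
proof -
  have "(\<lambda>\<omega>. indicator E \<omega> * indicator B (X m \<omega>) :: real) = indicator ({\<omega>\<in>space M. X m \<omega> \<in> B} \<inter> E)"
    using sets.sets_into_space[OF assms] by (auto simp: fun_eq_iff split: split_indicator)
  then show ?thesis using sets.sets_into_space[OF assms] by (simp add: Int_absorb2 Int_assoc)
qed

lemma measure_pair_eq_integral:
  assumes "G \<in> events"
  shows "measure M {\<omega>\<in>space M. \<omega> \<in> G \<and> X a \<omega> \<in> C \<and> X b \<omega> \<in> D}
     = (\<integral>\<omega>. indicator G \<omega> * indicator C (X a \<omega>) * indicator D (X b \<omega>) \<partial>M)"
proof -
  have "(\<lambda>\<omega>. indicator G \<omega> * indicator C (X a \<omega>) * indicator D (X b \<omega>) :: real)
      = indicator {\<omega>\<in>space M. \<omega> \<in> G \<and> X a \<omega> \<in> C \<and> X b \<omega> \<in> D}"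
    using sets.sets_into_space[OF assms] by (auto simp: fun_eq_iff split: split_indicator)
  then show ?thesis by (simp add: Int_absorb2)
qed

definition predictive :: "nat \<Rightarrow> 'b set \<Rightarrow> 'a \<Rightarrow> real" where
  "predictive n B = real_cond_exp M (F n) (\<lambda>\<omega>. indicator B (X n \<omega>))"

lemma measurable_predictive_F [measurable]: "predictive n B \<in> borel_measurable (F n)"
  unfolding predictive_def by (rule borel_measurable_cond_exp)

lemma measurable_predictive [measurable]: "predictive n B \<in> borel_measurable M"
  unfolding predictive_def by (rule borel_measurable_cond_exp2)

lemma integrable_indicator_X: "B \<in> sets borel \<Longrightarrow> integrable M (\<lambda>\<omega>. indicator B (X m \<omega>) :: real)"
  by (rule integrable_if_abs_le[where c=1]) (auto simp: indicator_def)

lemma predictive_bounds: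
  assumes "B \<in> sets borel"
  shows "AE \<omega> in M. 0 \<le> predictive n B \<omega> \<and> predictive n B \<omega> \<le> 1"
proof -
  have "AE \<omega> in M. 0 \<le> predictive n B \<omega>"
    unfolding predictive_def
    by (rule sigma_finite_subalgebra.real_cond_exp_ge_c[OF sigma_finite_subalgebra_F integrable_indicator_X[OF assms]])
      (auto simp: indicator_def)
  moreover have "AE \<omega> in M. predictive n B \<omega> \<le> 1"
    unfolding predictive_def
    by (rule sigma_finite_subalgebra.real_cond_exp_le_c[OF sigma_finite_subalgebra_F integrable_indicator_X[OF assms]])
      (auto simp: indicator_def)
  ultimately show ?thesis by (simp add: AE_conj_iff)
qed

lemma abs_predictive_le_1:
  assumes "B \<in> sets borel"
  shows "AE \<omega> in M. \<bar>predictive n B \<omega>\<bar> \<le> 1"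
  using predictive_bounds[OF assms, of n] by eventually_elim auto

lemma integrable_predictive_mult:
  assumes "B \<in> sets borel" "C \<in> sets borel"
  shows "integrable M (\<lambda>\<omega>. predictive n B \<omega> * predictive m C \<omega>)"
proof (rule integrable_if_abs_le[where c=1])
  show "AE \<omega> in M. \<bar>predictive n B \<omega> * predictive m C \<omega>\<bar> \<le> 1"
    using abs_predictive_le_1[OF assms(1), of n] abs_predictive_le_1[OF assms(2), of m]
    by eventually_elim (auto simp: abs_mult intro: mult_le_one)
qed simp

lemma cond_exp_indicator_future:
  assumes "B \<in> sets borel" and "n \<le> m"
  shows "AE \<omega> in M. real_cond_exp M (F n) (\<lambda>\<omega>. indicator B (X m \<omega>)) \<omega> = predictive n B \<omega>"
proof -
  have "bounded (range (indicator B :: 'b \<Rightarrow> real))"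
    by (rule bounded_subset[of "{0, 1}"]) (auto simp: indicator_def)
  with cid_X borel_measurable_indicator[OF assms(1)]
  have "AE \<omega> in M. real_cond_exp M (F n) (\<lambda>\<omega>. indicator B (X (n + (m - n)) \<omega>)) \<omega>
      = real_cond_exp M (F n) (\<lambda>\<omega>. indicator B (X n \<omega>)) \<omega>"
    unfolding cid_def by blast
  with assms(2) show ?thesis unfolding predictive_def by simp
qed

lemma integral_mult_indicator_future:
  assumes B: "B \<in> sets borel" and "n \<le> m" and f: "f \<in> borel_measurable (F n)"
    and bounded: "AE \<omega> in M. \<bar>f \<omega>\<bar> \<le> c"
  shows "(\<integral>\<omega>. f \<omega> * indicator B (X m \<omega>) \<partial>M) = (\<integral>\<omega>. f \<omega> * predictive n B \<omega> \<partial>M)"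
proof -
  have f_M: "f \<in> borel_measurable M" by (rule measurable_F_imp_measurable[OF f])
  have "integrable M (\<lambda>\<omega>. f \<omega> * indicator B (X m \<omega>))"
  proof (rule integrable_if_abs_le[where c=c])
    show "AE \<omega> in M. \<bar>f \<omega> * indicator B (X m \<omega>)\<bar> \<le> c"
      using bounded by eventually_elim (auto simp: indicator_def intro: order_trans[OF abs_ge_zero])
  qed (use f_M B in simp)
  then have "(\<integral>\<omega>. f \<omega> * indicator B (X m \<omega>) \<partial>M)
      = (\<integral>\<omega>. f \<omega> * real_cond_exp M (F n) (\<lambda>\<omega>. indicator B (X m \<omega>)) \<omega> \<partial>M)"
    using B by (intro sigma_finite_subalgebra.real_cond_exp_intg(2)[OF sigma_finite_subalgebra_F, symmetric] f) auto
  also have "\<dots> = (\<integral>\<omega>. f \<omega> * predictive n B \<omega> \<partial>M)"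
    using cond_exp_indicator_future[OF B \<open>n \<le> m\<close>] f_M
    by (intro integral_cong_AE) (auto elim!: eventually_mono)
  finally show ?thesis .
qed

lemma measure_Int_future_eq:
  assumes E: "E \<in> sets (F k)" and "k \<le> n" and B: "B \<in> sets borel"
  shows "measure M ({\<omega>\<in>space M. X n \<omega> \<in> B} \<inter> E) = measure M ({\<omega>\<in>space M. X k \<omega> \<in> B} \<inter> E)"
proof -
  have E_M: "E \<in> events" using E subalgebra_F by (auto simp: subalgebra_def)
  have indicator_E: "indicator E \<in> borel_measurable (F k)" using E by (rule borel_measurable_indicator)
  have "measure M ({\<omega>\<in>space M. X n \<omega> \<in> B} \<inter> E) = (\<integral>\<omega>. indicator E \<omega> * indicator B (X n \<omega>) \<partial>M)"
    by (rule measure_Int_eq_integral[OF E_M])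
  also have "\<dots> = (\<integral>\<omega>. indicator E \<omega> * predictive k B \<omega> \<partial>M)"
    using \<open>k \<le> n\<close> by (intro integral_mult_indicator_future[OF B _ indicator_E, where c=1]) auto
  also have "\<dots> = (\<integral>\<omega>. indicator E \<omega> * indicator B (X k \<omega>) \<partial>M)"
    by (intro integral_mult_indicator_future[OF B _ indicator_E, where c=1, symmetric]) auto
  also have "\<dots> = measure M ({\<omega>\<in>space M. X k \<omega> \<in> B} \<inter> E)"
    by (rule measure_Int_eq_integral[OF E_M, symmetric])
  finally show ?thesis .
qed

lemma predictive_martingale:
  assumes B: "B \<in> sets borel"
  shows "AE \<omega> in M. real_cond_exp M (F n) (predictive (Suc n) B) \<omega> = predictive n B \<omega>"
proof -
  have "AE \<omega> in M. real_cond_exp M (F n) (predictive (Suc n) B) \<omega>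
      = real_cond_exp M (F n) (\<lambda>\<omega>. indicator B (X (Suc n) \<omega>)) \<omega>"
    unfolding predictive_def
    by (rule sigma_finite_subalgebra.real_cond_exp_nested_subalg[OF sigma_finite_subalgebra_F
          subalgebra_F nat_filt_mono integrable_indicator_X[OF B]]) simp
  with cond_exp_indicator_future[OF B, of n "Suc n"] show ?thesis by auto
qed

lemma integral_predictive_mult_Suc:
  assumes B: "B \<in> sets borel"
  shows "(\<integral>\<omega>. predictive n B \<omega> * predictive (Suc n) B \<omega> \<partial>M) = (\<integral>\<omega>. predictive n B \<omega> * predictive n B \<omega> \<partial>M)"
proof -
  have "(\<integral>\<omega>. predictive n B \<omega> * predictive (Suc n) B \<omega> \<partial>M)
      = (\<integral>\<omega>. predictive n B \<omega> * real_cond_exp M (F n) (predictive (Suc n) B) \<omega> \<partial>M)"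
    by (rule sigma_finite_subalgebra.real_cond_exp_intg(2)[OF sigma_finite_subalgebra_F, symmetric])
      (simp_all add: integrable_predictive_mult B)
  also have "\<dots> = (\<integral>\<omega>. predictive n B \<omega> * predictive n B \<omega> \<partial>M)"
    using predictive_martingale[OF B, of n] by (intro integral_cong_AE) (auto elim!: eventually_mono)
  finally show ?thesis .
qed

definition increment_energy :: "nat \<Rightarrow> 'b set \<Rightarrow> real" where
  "increment_energy n B = (\<integral>\<omega>. (predictive (Suc n) B \<omega> - predictive n B \<omega>)\<^sup>2 \<partial>M)"

lemma increment_energy_nonneg: "0 \<le> increment_energy n B"
  unfolding increment_energy_def by (rule Bochner_Integration.integral_nonneg) simp

text \<open>Orthogonality of martingale increments.\<close>

lemma increment_energy_eq:
  assumes B: "B \<in> sets borel"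
  shows "increment_energy n B
    = (\<integral>\<omega>. predictive (Suc n) B \<omega> * predictive (Suc n) B \<omega> \<partial>M) - (\<integral>\<omega>. predictive n B \<omega> * predictive n B \<omega> \<partial>M)"
proof -
  let ?a = "predictive n B" and ?b = "predictive (Suc n) B"
  have "increment_energy n B = (\<integral>\<omega>. ?b \<omega> * ?b \<omega> - 2 * (?a \<omega> * ?b \<omega>) + ?a \<omega> * ?a \<omega> \<partial>M)"
    unfolding increment_energy_def by (rule Bochner_Integration.integral_cong) (simp_all add: power2_eq_square algebra_simps)
  also have "\<dots> = (\<integral>\<omega>. ?b \<omega> * ?b \<omega> \<partial>M) - 2 * (\<integral>\<omega>. ?a \<omega> * ?b \<omega> \<partial>M) + (\<integral>\<omega>. ?a \<omega> * ?a \<omega> \<partial>M)"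
    using integrable_predictive_mult[OF B B] by simp
  finally show ?thesis unfolding integral_predictive_mult_Suc[OF B] by simp
qed

lemma summable_increment_energy:
  assumes B: "B \<in> sets borel"
  shows "summable (\<lambda>n. increment_energy n B)"
proof (rule summableI_nonneg_bounded[OF increment_energy_nonneg])
  fix m
  let ?Q = "\<lambda>n. \<integral>\<omega>. predictive n B \<omega> * predictive n B \<omega> \<partial>M"
  have "AE \<omega> in M. predictive m B \<omega> * predictive m B \<omega> \<le> 1"
    using predictive_bounds[OF B, of m] by eventually_elim (auto intro: mult_le_one)
  then have "?Q m \<le> (\<integral>\<omega>. 1 \<partial>M)"
    by (intro integral_mono_AE integrable_predictive_mult B) simp_all
  then have "?Q m \<le> 1" by (simp add: prob_space)
  moreover have "0 \<le> ?Q 0" by (rule Bochner_Integration.integral_nonneg) simp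
  moreover have "(\<Sum>n<m. increment_energy n B) = ?Q m - ?Q 0"
    by (induction m) (simp_all add: increment_energy_eq[OF B])
  ultimately show "(\<Sum>n<m. increment_energy n B) \<le> 1" by linarith
qed

lemma pair_integral_predictive_approx:
  assumes g: "g \<in> borel_measurable (F N)" and g_le: "\<And>\<omega>. \<bar>g \<omega>\<bar> \<le> 1"
    and C: "C \<in> sets borel" and D: "D \<in> sets borel"
  shows "((\<integral>\<omega>. g \<omega> * indicator C (X N \<omega>) * indicator D (X (Suc N) \<omega>) \<partial>M)
      - (\<integral>\<omega>. g \<omega> * predictive N C \<omega> * predictive N D \<omega> \<partial>M))\<^sup>2 \<le> increment_energy N D"
proof -
  define h where "h \<omega> = g \<omega> * indicator C (X N \<omega>)" for \<omega>
  have h_F: "h \<in> borel_measurable (F (Suc N))"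
    unfolding h_def using measurable_F_mono[OF g] measurable_nat_filt[of N "Suc N" X M] C
    by (intro borel_measurable_times measurable_compose[OF _ borel_measurable_indicator]) auto
  have h_M [measurable]: "h \<in> borel_measurable M" by (rule measurable_F_imp_measurable[OF h_F])
  have h_le: "\<bar>h \<omega>\<bar> \<le> 1" for \<omega>
    unfolding h_def using g_le[of \<omega>] by (auto simp: indicator_def abs_mult)
  have int_h_pred: "integrable M (\<lambda>\<omega>. h \<omega> * predictive m D \<omega>)" for m
    using abs_predictive_le_1[OF D, of m]
    by (intro integrable_if_abs_le[where c=1]) (auto elim!: eventually_mono simp: abs_mult intro: mult_le_one h_le)
  have "(\<integral>\<omega>. g \<omega> * indicator C (X N \<omega>) * indicator D (X (Suc N) \<omega>) \<partial>M) = (\<integral>\<omega>. h \<omega> * indicator D (X (Suc N) \<omega>) \<partial>M)"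
    by (simp add: h_def)
  also have "\<dots> = (\<integral>\<omega>. h \<omega> * predictive (Suc N) D \<omega> \<partial>M)"
    by (rule integral_mult_indicator_future[OF D order.refl h_F, where c=1]) (simp add: h_le)
  finally have future: "(\<integral>\<omega>. g \<omega> * indicator C (X N \<omega>) * indicator D (X (Suc N) \<omega>) \<partial>M)
      = (\<integral>\<omega>. h \<omega> * predictive (Suc N) D \<omega> \<partial>M)" .
  have "(\<integral>\<omega>. g \<omega> * predictive N C \<omega> * predictive N D \<omega> \<partial>M) = (\<integral>\<omega>. (g \<omega> * predictive N D \<omega>) * predictive N C \<omega> \<partial>M)"
    by (simp add: ac_simps)
  also have "\<dots> = (\<integral>\<omega>. (g \<omega> * predictive N D \<omega>) * indicator C (X N \<omega>) \<partial>M)"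
  proof (rule integral_mult_indicator_future[OF C order.refl _, where c=1, symmetric])
    show "(\<lambda>\<omega>. g \<omega> * predictive N D \<omega>) \<in> borel_measurable (F N)" using g by measurable
    show "AE \<omega> in M. \<bar>g \<omega> * predictive N D \<omega>\<bar> \<le> 1"
      using abs_predictive_le_1[OF D, of N] by eventually_elim (auto simp: abs_mult intro: mult_le_one g_le)
  qed
  finally have present: "(\<integral>\<omega>. g \<omega> * predictive N C \<omega> * predictive N D \<omega> \<partial>M) = (\<integral>\<omega>. h \<omega> * predictive N D \<omega> \<partial>M)"
    by (simp add: h_def ac_simps)
  have "(\<integral>\<omega>. h \<omega> * predictive (Suc N) D \<omega> \<partial>M) - (\<integral>\<omega>. h \<omega> * predictive N D \<omega> \<partial>M)
      = (\<integral>\<omega>. h \<omega> * (predictive (Suc N) D \<omega> - predictive N D \<omega>) \<partial>M)"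
    by (simp add: right_diff_distrib Bochner_Integration.integral_diff[OF int_h_pred int_h_pred])
  also have "(\<dots>)\<^sup>2 \<le> increment_energy N D"
    unfolding increment_energy_def
  proof (rule square_integral_mult_le[where c=2])
    show "AE \<omega> in M. \<bar>predictive (Suc N) D \<omega> - predictive N D \<omega>\<bar> \<le> 2"
      using abs_predictive_le_1[OF D, of N] abs_predictive_le_1[OF D, of "Suc N"] by eventually_elim auto
  qed (simp_all add: h_le)
  finally show ?thesis by (simp only: future present)
qed

lemma pair_integrals_swap_eq:
  fixes g :: "'a \<Rightarrow> real"
  assumes g: "g \<in> borel_measurable (F k)" and g_le: "\<And>\<omega>. \<bar>g \<omega>\<bar> \<le> 1"
    and C: "C \<in> sets borel" and D: "D \<in> sets borel"
    and c1: "\<And>N. N \<ge> k \<Longrightarrow> (\<integral>\<omega>. g \<omega> * indicator C (X N \<omega>) * indicator D (X (Suc N) \<omega>) \<partial>M) = c1"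
    and c2: "\<And>N. N \<ge> k \<Longrightarrow> (\<integral>\<omega>. g \<omega> * indicator D (X N \<omega>) * indicator C (X (Suc N) \<omega>) \<partial>M) = c2"
  shows "c1 = c2"
proof -
  have "(c1 - c2)\<^sup>2 \<le> 0"
  proof (rule nonpos_if_eventually_le_summable)
    show "summable (\<lambda>N. 2 * increment_energy N D + 2 * increment_energy N C)"
      using summable_increment_energy[OF C] summable_increment_energy[OF D] by (intro summable_add summable_mult)
  next
    fix N assume "k \<le> N"
    have g_N: "g \<in> borel_measurable (F N)" by (rule measurable_F_mono[OF g \<open>k \<le> N\<close>])
    define m where "m = (\<integral>\<omega>. g \<omega> * predictive N C \<omega> * predictive N D \<omega> \<partial>M)"
    have m_sym: "(\<integral>\<omega>. g \<omega> * predictive N D \<omega> * predictive N C \<omega> \<partial>M) = m"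
      by (simp add: m_def ac_simps)
    have "(c1 - m)\<^sup>2 \<le> increment_energy N D"
      using pair_integral_predictive_approx[OF g_N g_le C D] by (simp add: c1[OF \<open>k \<le> N\<close>] m_def)
    moreover have "(c2 - m)\<^sup>2 \<le> increment_energy N C"
      using pair_integral_predictive_approx[OF g_N g_le D C] by (simp add: c2[OF \<open>k \<le> N\<close>] m_sym)
    moreover have "(c1 - c2)\<^sup>2 \<le> 2 * (c1 - m)\<^sup>2 + 2 * (c2 - m)\<^sup>2"
      using zero_le_power2[of "c1 + c2 - 2 * m"] by (simp add: power2_eq_square algebra_simps)
    ultimately show "(c1 - c2)\<^sup>2 \<le> 2 * increment_energy N D + 2 * increment_energy N C"
      by linarith
  qed
  then show ?thesis by simp
qed

section \<open>Invariance of the finite-dimensional laws\<close>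

definition cond_laws_perm_invariant :: bool where
  "cond_laws_perm_invariant \<longleftrightarrow> (\<forall>n \<ge> 1. \<forall>\<pi>. \<pi> permutes {..<n} \<longrightarrow>
      (\<forall>A::nat \<Rightarrow> 'b set. (\<forall>i<n. A i \<in> sets borel) \<longrightarrow>
        (let E1 = {\<omega> \<in> space M. \<forall>i<n. X i \<omega> \<in> A i};
             E2 = {\<omega> \<in> space M. \<forall>i<n. X (\<pi> i) \<omega> \<in> A i}
         in measure M E1 > 0 \<longrightarrow> measure M E2 > 0 \<longrightarrow>
            (\<forall>B \<in> sets borel.
               measure M ({\<omega> \<in> space M. X n \<omega> \<in> B} \<inter> E1) / measure M E1
             = measure M ({\<omega> \<in> space M. X n \<omega> \<in> B} \<inter> E2) / measure M E2))))"

definition reindex_invariant :: "nat \<Rightarrow> bool" where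
  "reindex_invariant k \<longleftrightarrow> (\<forall>j (A::nat \<Rightarrow> 'b set). inj_on j {..<k} \<longrightarrow> (\<forall>i<k. A i \<in> sets borel) \<longrightarrow>
     measure M {\<omega>\<in>space M. \<forall>i<k. X (j i) \<omega> \<in> A i} = measure M {\<omega>\<in>space M. \<forall>i<k. X i \<omega> \<in> A i})"

lemma measure_Int_reindex_eq:
  assumes H: cond_laws_perm_invariant
    and inj: "inj_on j {..<k}" and range: "j ` {..<k} \<subseteq> {..<n}" and "k \<le> n"
    and A: "\<And>i. i < k \<Longrightarrow> A i \<in> sets borel" and B: "B \<in> sets borel"
    and same_measure: "measure M {\<omega>\<in>space M. \<forall>i<k. X (j i) \<omega> \<in> A i} = measure M {\<omega>\<in>space M. \<forall>i<k. X i \<omega> \<in> A i}"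
  shows "measure M ({\<omega>\<in>space M. X n \<omega> \<in> B} \<inter> {\<omega>\<in>space M. \<forall>i<k. X (j i) \<omega> \<in> A i})
       = measure M ({\<omega>\<in>space M. X n \<omega> \<in> B} \<inter> {\<omega>\<in>space M. \<forall>i<k. X i \<omega> \<in> A i})"
proof -
  define E1 where "E1 = {\<omega>\<in>space M. \<forall>i<k. X i \<omega> \<in> A i}"
  define E2 where "E2 = {\<omega>\<in>space M. \<forall>i<k. X (j i) \<omega> \<in> A i}"
  have E1_M: "E1 \<in> events" and E2_M: "E2 \<in> events"
    unfolding E1_def E2_def using A by (auto intro: rectangle_in_events[where j="\<lambda>i. i", simplified] rectangle_in_events)
  have E2_E1: "measure M E2 = measure M E1" using same_measure by (simp add: E1_def E2_def)
  have null_Int: "measure M ({\<omega>\<in>space M. X n \<omega> \<in> B} \<inter> E) = 0" if "E \<in> events" "measure M E = 0" for E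
    using that finite_measure_mono[of "{\<omega>\<in>space M. X n \<omega> \<in> B} \<inter> E" E] by (intro antisym) auto
  consider "k = 0" | "measure M E1 = 0" | "k \<noteq> 0" "measure M E1 > 0"
    using measure_nonneg[of M E1] by linarith
  then have "measure M ({\<omega>\<in>space M. X n \<omega> \<in> B} \<inter> E2) = measure M ({\<omega>\<in>space M. X n \<omega> \<in> B} \<inter> E1)"
  proof cases
    case 1
    then show ?thesis by (simp add: E1_def E2_def)
  next
    case 2
    then show ?thesis using null_Int E1_M E2_M E2_E1 by simp
  next
    case 3
    obtain \<pi> where \<pi>: "\<pi> permutes {..<n}" and \<pi>_j: "\<And>i. i < k \<Longrightarrow> \<pi> i = j i"
      using inj_on_extends_to_permutation[OF inj range \<open>k \<le> n\<close>] by blast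
    define A' where "A' i = (if i < k then A i else UNIV)" for i
    have E1_A': "E1 = {\<omega>\<in>space M. \<forall>i<n. X i \<omega> \<in> A' i}"
      and E2_A': "E2 = {\<omega>\<in>space M. \<forall>i<n. X (\<pi> i) \<omega> \<in> A' i}"
      using \<open>k \<le> n\<close> \<pi>_j by (auto simp: E1_def E2_def A'_def)
    have "1 \<le> n" and "\<And>i. i < n \<Longrightarrow> A' i \<in> sets borel"
      using 3 \<open>k \<le> n\<close> A by (auto simp: A'_def)
    moreover have "0 < measure M E1" and "0 < measure M E2" using 3 E2_E1 by simp_all
    ultimately have "measure M ({\<omega>\<in>space M. X n \<omega> \<in> B} \<inter> E1) / measure M E1
        = measure M ({\<omega>\<in>space M. X n \<omega> \<in> B} \<inter> E2) / measure M E2"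
      using H[unfolded cond_laws_perm_invariant_def Let_def, rule_format, of n \<pi> A' B, folded E1_A' E2_A']
        \<pi> B by blast
    with E2_E1 3 show ?thesis by (simp add: field_simps)
  qed
  then show ?thesis by (simp add: E1_def E2_def)
qed

lemma reindex_invariant_Suc_last_max:
  assumes H: cond_laws_perm_invariant and IH: "reindex_invariant k"
    and inj: "inj_on j {..<Suc k}" and last_max: "\<And>i. i < k \<Longrightarrow> j i < j k"
    and A: "\<And>i. i < Suc k \<Longrightarrow> A i \<in> sets borel"
  shows "measure M {\<omega>\<in>space M. \<forall>i<Suc k. X (j i) \<omega> \<in> A i} = measure M {\<omega>\<in>space M. \<forall>i<Suc k. X i \<omega> \<in> A i}"
proof -
  have inj_k: "inj_on j {..<k}" using inj by (rule inj_on_subset) auto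
  have range: "j ` {..<k} \<subseteq> {..<j k}" using last_max by auto
  have "k \<le> j k" using card_inj_on_le[OF inj_k range] by simp
  have A_k: "\<And>i. i < k \<Longrightarrow> A i \<in> sets borel" using A by simp
  have "measure M {\<omega>\<in>space M. \<forall>i<Suc k. X (j i) \<omega> \<in> A i}
      = measure M ({\<omega>\<in>space M. X (j k) \<omega> \<in> A k} \<inter> {\<omega>\<in>space M. \<forall>i<k. X (j i) \<omega> \<in> A i})"
    by (rule arg_cong[where f="measure M"]) (auto simp: less_Suc_eq)
  also have "\<dots> = measure M ({\<omega>\<in>space M. X (j k) \<omega> \<in> A k} \<inter> {\<omega>\<in>space M. \<forall>i<k. X i \<omega> \<in> A i})"
    using IH[unfolded reindex_invariant_def, rule_format, OF inj_k A_k]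
    by (intro measure_Int_reindex_eq[OF H inj_k range \<open>k \<le> j k\<close> A_k A]) simp_all
  also have "\<dots> = measure M ({\<omega>\<in>space M. X k \<omega> \<in> A k} \<inter> {\<omega>\<in>space M. \<forall>i<k. X i \<omega> \<in> A i})"
    using measure_Int_future_eq[OF rectangle_in_F[OF order.refl A_k] \<open>k \<le> j k\<close> A[of k]] by simp
  also have "\<dots> = measure M {\<omega>\<in>space M. \<forall>i<Suc k. X i \<omega> \<in> A i}"
    by (rule arg_cong[where f="measure M"]) (auto simp: less_Suc_eq)
  finally show ?thesis .
qed

lemma reindex_invariant_Suc_transpose:
  assumes H: cond_laws_perm_invariant and IH: "reindex_invariant k" and "p < k"
    and A: "\<And>i. i < Suc k \<Longrightarrow> A i \<in> sets borel"
  shows "measure M {\<omega>\<in>space M. \<forall>i<Suc k. X i \<omega> \<in> A (Transposition.transpose p k i)} = measure M {\<omega>\<in>space M. \<forall>i<Suc k. X i \<omega> \<in> A i}"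
proof -
  define G where "G = {\<omega>\<in>space M. \<forall>i<k. X i \<omega> \<in> (if i = p then UNIV else A i)}"
  have G_F: "G \<in> sets (F k)" unfolding G_def using A by (intro rectangle_in_F) auto
  have G_M: "G \<in> events" using G_F subalgebra_F by (auto simp: subalgebra_def)
  define j where "j N i = (if i = p then N else if i = k then Suc N else i)" for N i
  have measure_j: "measure M {\<omega>\<in>space M. \<forall>i<Suc k. X (j N i) \<omega> \<in> B i} = measure M {\<omega>\<in>space M. \<forall>i<Suc k. X i \<omega> \<in> B i}"
    if "k \<le> N" and "\<And>i. i < Suc k \<Longrightarrow> B i \<in> sets borel" for N B
    using that(1) \<open>p < k\<close>
    by (intro reindex_invariant_Suc_last_max[OF H IH _ _ that(2)]) (auto simp: j_def inj_on_def)
  have event_j: "{\<omega>\<in>space M. \<forall>i<Suc k. X (j N i) \<omega> \<in> B i} = {\<omega>\<in>space M. \<omega> \<in> G \<and> X N \<omega> \<in> B p \<and> X (Suc N) \<omega> \<in> B k}"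
    if "k \<le> N" and "\<And>i. i < k \<Longrightarrow> i \<noteq> p \<Longrightarrow> B i = A i" for N B
  proof -
    have "(\<forall>i<Suc k. X (j N i) \<omega> \<in> B i) \<longleftrightarrow>
        (\<forall>i<k. X i \<omega> \<in> (if i = p then UNIV else A i)) \<and> X N \<omega> \<in> B p \<and> X (Suc N) \<omega> \<in> B k" for \<omega>
      using that \<open>p < k\<close> unfolding j_def less_Suc_eq by (auto split: if_splits)
    then show ?thesis by (auto simp: G_def)
  qed
  have A_transpose: "A (Transposition.transpose p k i) \<in> sets borel" if "i < Suc k" for i
    using A that \<open>p < k\<close> by (simp add: Transposition.transpose_def)
  show ?thesis
  proof (rule pair_integrals_swap_eq[OF borel_measurable_indicator[OF G_F] _ A[of k] A[of p]])
    fix N assume "k \<le> N"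
    show "(\<integral>\<omega>. indicator G \<omega> * indicator (A k) (X N \<omega>) * indicator (A p) (X (Suc N) \<omega>) \<partial>M)
        = measure M {\<omega>\<in>space M. \<forall>i<Suc k. X i \<omega> \<in> A (Transposition.transpose p k i)}"
      using measure_j[OF \<open>k \<le> N\<close>, of "\<lambda>i. A (Transposition.transpose p k i)"] A_transpose
        event_j[OF \<open>k \<le> N\<close>, of "\<lambda>i. A (Transposition.transpose p k i)"] \<open>p < k\<close>
      by (simp add: measure_pair_eq_integral[OF G_M])
    show "(\<integral>\<omega>. indicator G \<omega> * indicator (A p) (X N \<omega>) * indicator (A k) (X (Suc N) \<omega>) \<partial>M)
        = measure M {\<omega>\<in>space M. \<forall>i<Suc k. X i \<omega> \<in> A i}"
      using measure_j[OF \<open>k \<le> N\<close>, of A] A event_j[OF \<open>k \<le> N\<close>, of A]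
      by (simp add: measure_pair_eq_integral[OF G_M])
  qed (simp_all add: indicator_def less_SucI[OF \<open>p < k\<close>])
qed

lemma reindex_invariant_Suc:
  assumes H: cond_laws_perm_invariant and IH: "reindex_invariant k"
  shows "reindex_invariant (Suc k)"
  unfolding reindex_invariant_def
proof (intro allI impI)
  fix j :: "nat \<Rightarrow> nat" and A :: "nat \<Rightarrow> 'b set"
  assume inj: "inj_on j {..<Suc k}" and A: "\<forall>i<Suc k. A i \<in> sets borel"
  have "Max (j ` {..<Suc k}) \<in> j ` {..<Suc k}" by (rule Max_in) auto
  then obtain p where p: "p < Suc k" and p_Max: "j p = Max (j ` {..<Suc k})" by force
  have p_max: "j i \<le> j p" if "i < Suc k" for i
    unfolding p_Max using that by (intro Max_ge) auto
  define \<sigma> where "\<sigma> = Transposition.transpose p k"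
  have \<sigma>: "\<sigma> permutes {..<Suc k}" using p by (simp add: \<sigma>_def permutes_swap_id)
  have "measure M {\<omega>\<in>space M. \<forall>i<Suc k. X (j i) \<omega> \<in> A i}
      = measure M {\<omega>\<in>space M. \<forall>i<Suc k. X (j (\<sigma> i)) \<omega> \<in> A (\<sigma> i)}"
  proof -
    have "(\<forall>i<Suc k. X (j (\<sigma> i)) \<omega> \<in> A (\<sigma> i)) \<longleftrightarrow> (\<forall>i<Suc k. X (j i) \<omega> \<in> A i)" for \<omega>
      by (rule all_less_permutes_iff[OF \<sigma>])
    then show ?thesis by simp
  qed
  also have "\<dots> = measure M {\<omega>\<in>space M. \<forall>i<Suc k. X i \<omega> \<in> A (\<sigma> i)}"
  proof (rule reindex_invariant_Suc_last_max[OF H IH])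
    have "inj_on (j \<circ> \<sigma>) {..<Suc k}"
      using permutes_inj_on[OF \<sigma>] inj permutes_image[OF \<sigma>] by (intro comp_inj_on) simp_all
    then show "inj_on (\<lambda>i. j (\<sigma> i)) {..<Suc k}" by (simp add: comp_def)
    fix i assume "i < k"
    then have "\<sigma> i < Suc k" "\<sigma> i \<noteq> p" using p by (auto simp: \<sigma>_def Transposition.transpose_def)
    then show "j (\<sigma> i) < j (\<sigma> k)"
      using p_max[of "\<sigma> i"] inj_on_eq_iff[OF inj, of "\<sigma> i" p] p by (simp add: \<sigma>_def)
  next
    show "A (\<sigma> i) \<in> sets borel" if "i < Suc k" for i
      using A permutes_in_image[OF \<sigma>] that by auto
  qed
  also have "\<dots> = measure M {\<omega>\<in>space M. \<forall>i<Suc k. X i \<omega> \<in> A i}"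
  proof (cases "p = k")
    case False
    then show ?thesis unfolding \<sigma>_def using p A by (intro reindex_invariant_Suc_transpose[OF H IH]) auto
  qed (simp add: \<sigma>_def)
  finally show "measure M {\<omega>\<in>space M. \<forall>i<Suc k. X (j i) \<omega> \<in> A i} = measure M {\<omega>\<in>space M. \<forall>i<Suc k. X i \<omega> \<in> A i}" .
qed

lemma reindex_invariant_if_cond_laws_perm_invariant:
  assumes cond_laws_perm_invariant
  shows "reindex_invariant k"
proof (induction k)
  case 0
  show ?case by (simp add: reindex_invariant_def)
next
  case (Suc k)
  then show ?case by (rule reindex_invariant_Suc[OF assms])
qed

lemma exchangeable_if_cond_laws_perm_invariant:
  assumes cond_laws_perm_invariant
  shows "exchangeable M X"
  unfolding exchangeable_iff_rectangles[OF measurable_X]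
proof (intro allI impI)
  fix \<pi> :: "nat \<Rightarrow> nat" and J and A :: "nat \<Rightarrow> 'b set"
  assume "\<pi> permutes UNIV" and "finite J" and A: "\<forall>i\<in>J. A i \<in> sets borel"
  obtain n where J: "J \<subseteq> {..<n}" using \<open>finite J\<close> by (meson finite_nat_iff_bounded)
  define A' where "A' i = (if i \<in> J then A i else UNIV)" for i
  have "inj_on \<pi> {..<n}"
    using permutes_inj[OF \<open>\<pi> permutes UNIV\<close>] by (rule inj_on_subset) simp
  moreover have "\<forall>i<n. A' i \<in> sets borel" using A by (simp add: A'_def)
  ultimately have "measure M {\<omega>\<in>space M. \<forall>i<n. X (\<pi> i) \<omega> \<in> A' i} = measure M {\<omega>\<in>space M. \<forall>i<n. X i \<omega> \<in> A' i}"
    using reindex_invariant_if_cond_laws_perm_invariant[OF assms, of n] unfolding reindex_invariant_def by blast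
  moreover have "{\<omega>\<in>space M. \<forall>i\<in>J. X (\<pi> i) \<omega> \<in> A i} = {\<omega>\<in>space M. \<forall>i<n. X (\<pi> i) \<omega> \<in> A' i}"
    and "{\<omega>\<in>space M. \<forall>i\<in>J. X i \<omega> \<in> A i} = {\<omega>\<in>space M. \<forall>i<n. X i \<omega> \<in> A' i}"
    using J by (auto simp: A'_def)
  ultimately show "measure M {\<omega>\<in>space M. \<forall>i\<in>J. X (\<pi> i) \<omega> \<in> A i} = measure M {\<omega>\<in>space M. \<forall>i\<in>J. X i \<omega> \<in> A i}"
    by simp
qed

lemma cond_laws_perm_invariant_if_exchangeable:
  assumes "exchangeable M X"
  shows cond_laws_perm_invariant
  unfolding cond_laws_perm_invariant_def Let_def
proof (intro allI impI ballI)
  fix n :: nat and \<pi> :: "nat \<Rightarrow> nat" and A :: "nat \<Rightarrow> 'b set" and B :: "'b set"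
  assume \<pi>: "\<pi> permutes {..<n}" and A: "\<forall>i<n. A i \<in> sets borel" and B: "B \<in> sets borel"
  have \<pi>_UNIV: "\<pi> permutes UNIV" using \<pi> by (rule permutes_subset) simp
  have "{i. \<pi> i \<noteq> i} \<subseteq> {..<n}" using \<pi> by (auto simp: permutes_def)
  then have "finite {i. \<pi> i \<noteq> i}" by (rule finite_subset) simp
  note invariant = assms[unfolded exchangeable_iff_rectangles[OF measurable_X], rule_format, OF \<pi>_UNIV this]
  have "\<pi> n = n" using \<pi> by (simp add: permutes_def)
  define A' where "A' i = (if i < n then A i else B)" for i
  have "{\<omega>\<in>space M. \<forall>i\<in>insert n {..<n}. X (\<pi> i) \<omega> \<in> A' i} = {\<omega>\<in>space M. X n \<omega> \<in> B} \<inter> {\<omega>\<in>space M. \<forall>i<n. X (\<pi> i) \<omega> \<in> A i}"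
    and "{\<omega>\<in>space M. \<forall>i\<in>insert n {..<n}. X i \<omega> \<in> A' i} = {\<omega>\<in>space M. X n \<omega> \<in> B} \<inter> {\<omega>\<in>space M. \<forall>i<n. X i \<omega> \<in> A i}"
    using \<open>\<pi> n = n\<close> by (auto simp: A'_def)
  moreover have "measure M {\<omega>\<in>space M. \<forall>i\<in>insert n {..<n}. X (\<pi> i) \<omega> \<in> A' i} = measure M {\<omega>\<in>space M. \<forall>i\<in>insert n {..<n}. X i \<omega> \<in> A' i}"
    using A B by (intro invariant) (auto simp: A'_def)
  ultimately have "measure M ({\<omega>\<in>space M. X n \<omega> \<in> B} \<inter> {\<omega>\<in>space M. \<forall>i<n. X (\<pi> i) \<omega> \<in> A i})
      = measure M ({\<omega>\<in>space M. X n \<omega> \<in> B} \<inter> {\<omega>\<in>space M. \<forall>i<n. X i \<omega> \<in> A i})"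
    by (simp only:)
  moreover have "measure M {\<omega>\<in>space M. \<forall>i<n. X (\<pi> i) \<omega> \<in> A i} = measure M {\<omega>\<in>space M. \<forall>i<n. X i \<omega> \<in> A i}"
    using invariant[of "{..<n}" A] A by (simp add: Ball_def)
  ultimately show "measure M ({\<omega>\<in>space M. X n \<omega> \<in> B} \<inter> {\<omega>\<in>space M. \<forall>i<n. X i \<omega> \<in> A i}) / measure M {\<omega>\<in>space M. \<forall>i<n. X i \<omega> \<in> A i}
      = measure M ({\<omega>\<in>space M. X n \<omega> \<in> B} \<inter> {\<omega>\<in>space M. \<forall>i<n. X (\<pi> i) \<omega> \<in> A i}) / measure M {\<omega>\<in>space M. \<forall>i<n. X (\<pi> i) \<omega> \<in> A i}"
    by (simp only:)
qed

end

theorem mainTheorem5: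
  fixes M :: "'a measure" and X :: "nat \<Rightarrow> 'a \<Rightarrow> 'b::polish_space"
  assumes "prob_space M"
    and "\<And>i. X i \<in> borel_measurable M"
    and "cid M X"
  shows "exchangeable M X \<longleftrightarrow>
    (\<forall>n \<ge> 1. \<forall>\<pi>. \<pi> permutes {..<n} \<longrightarrow>
      (\<forall>A::nat \<Rightarrow> 'b set. (\<forall>i<n. A i \<in> sets borel) \<longrightarrow>
        (let E1 = {\<omega> \<in> space M. \<forall>i<n. X i \<omega> \<in> A i};
             E2 = {\<omega> \<in> space M. \<forall>i<n. X (\<pi> i) \<omega> \<in> A i}
         in measure M E1 > 0 \<longrightarrow> measure M E2 > 0 \<longrightarrow>
            (\<forall>B \<in> sets borel.
               measure M ({\<omega> \<in> space M. X n \<omega> \<in> B} \<inter> E1) / measure M E1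
             = measure M ({\<omega> \<in> space M. X n \<omega> \<in> B} \<inter> E2) / measure M E2))))"
proof -
  interpret cid_sequence M X
    using assms by (simp add: cid_sequence_def cid_sequence_axioms_def)
  have "exchangeable M X \<longleftrightarrow> cond_laws_perm_invariant"
    using exchangeable_if_cond_laws_perm_invariant cond_laws_perm_invariant_if_exchangeable by blast
  then show ?thesis unfolding cond_laws_perm_invariant_def .
qed

end
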